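(* A random joint choice rule $p$ on a finite set $X$ is consistent with consumption dependent random utility if and only if it satisfies complete monotonicity and marginality.
   Context: $X$ is finite, $\mathcal{X}$ the nonempty subsets of $X$, $\mathcal{L}(X)$ the linear orders on $X$, $N(x,A)=\{\succ: x\succ y\ \forall y\in A\setminus\{x\}\}$. A random joint choice rule assigns to each $A,B\in\mathcal{X}$ and $(x,y)\in A\times B$ a number $p(x,y,A,B)\ge0$ with $\sum_{x\in A}\sum_{y\in B}p(x,y,A,B)=1$. Its Möbius inverse $q$ is defined by $p(x,y,A,B)=\sum_{A\subseteq A'\subseteq X}\sum_{B\subseteq B'\subseteq X}q(x,y,A',B')$. $p$ is consistent with consumption dependent random utility if there exist $\nu\in\Delta(\mathcal{L}(X))$ and a transition function $t:X\times\mathcal{L}(X)\to\Delta(\mathcal{L}(X))$ (writing $t_{\succ'}(x,\succ)$ for the probability of $\succ'$) with $p(x,y,A,B)=\sum_{\succ\in N(x,A)}\sum_{\succ'\in N(y,B)}\nu(\succ)t_{\succ'}(x,\succ)$ for all $A,B\in\mathcal{X}$, $(x,y)\in A\times B$. Complete monotonicity: $q(x,y,A,B)\ge 0$ for all $A,B\in\mathcal{X}$, $(x,y)\in A\times B$. Marginality: for all $A,B,C\in\mathcal{X}$ and $x\in A$, $\sum_{y\in B}p(x,y,A,B)=\sum_{y\in C}p(x,y,A,C)$. *)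

theory Defs
  imports Complex_Main
begin

text \<open>Strict linear orders on X, as relations contained in X \<times> X
  ((x,y) \<in> r means x \<succ> y).\<close>
definition lin_orders :: "'a set \<Rightarrow> 'a rel set" where
  "lin_orders X = {r. strict_linear_order_on X r \<and> r \<subseteq> X \<times> X}"

definition nonempty_subsets :: "'a set \<Rightarrow> 'a set set" where
  "nonempty_subsets X = {A. A \<subseteq> X \<and> A \<noteq> {}}"

definition N_set :: "'a set \<Rightarrow> 'a \<Rightarrow> 'a set \<Rightarrow> 'a rel set" where
  "N_set X x A = {r \<in> lin_orders X. \<forall>y \<in> A - {x}. (x, y) \<in> r}"

definition random_joint_choice_rule ::
  "'a set \<Rightarrow> ('a \<Rightarrow> 'a \<Rightarrow> 'a set \<Rightarrow> 'a set \<Rightarrow> real) \<Rightarrow> bool" where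
  "random_joint_choice_rule X p \<longleftrightarrow>
     (\<forall>A \<in> nonempty_subsets X. \<forall>B \<in> nonempty_subsets X.
        (\<forall>x \<in> A. \<forall>y \<in> B. p x y A B \<ge> 0) \<and>
        (\<Sum>x\<in>A. \<Sum>y\<in>B. p x y A B) = 1)"

text \<open>Moebius inverse q of p (the unique q with
  p(x,y,A,B) = sum over A \<subseteq> A' \<subseteq> X, B \<subseteq> B' \<subseteq> X of q(x,y,A',B')),
  given by the Moebius inversion formula.\<close>
definition moebius_inverse ::
  "'a set \<Rightarrow> ('a \<Rightarrow> 'a \<Rightarrow> 'a set \<Rightarrow> 'a set \<Rightarrow> real) \<Rightarrow> 'a \<Rightarrow> 'a \<Rightarrow> 'a set \<Rightarrow> 'a set \<Rightarrow> real" where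
  "moebius_inverse X p x y A B =
     (\<Sum>A' \<in> {A'. A \<subseteq> A' \<and> A' \<subseteq> X}. \<Sum>B' \<in> {B'. B \<subseteq> B' \<and> B' \<subseteq> X}.
        (-1) ^ (card (A' - A) + card (B' - B)) * p x y A' B')"

definition complete_monotonicity ::
  "'a set \<Rightarrow> ('a \<Rightarrow> 'a \<Rightarrow> 'a set \<Rightarrow> 'a set \<Rightarrow> real) \<Rightarrow> bool" where
  "complete_monotonicity X p \<longleftrightarrow>
     (\<forall>A \<in> nonempty_subsets X. \<forall>B \<in> nonempty_subsets X. \<forall>x \<in> A. \<forall>y \<in> B.
        moebius_inverse X p x y A B \<ge> 0)"

definition marginality ::
  "'a set \<Rightarrow> ('a \<Rightarrow> 'a \<Rightarrow> 'a set \<Rightarrow> 'a set \<Rightarrow> real) \<Rightarrow> bool" where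
  "marginality X p \<longleftrightarrow>
     (\<forall>A \<in> nonempty_subsets X. \<forall>B \<in> nonempty_subsets X. \<forall>C \<in> nonempty_subsets X.
        \<forall>x \<in> A. (\<Sum>y\<in>B. p x y A B) = (\<Sum>y\<in>C. p x y A C))"

definition is_distribution :: "'a set \<Rightarrow> ('a rel \<Rightarrow> real) \<Rightarrow> bool" where
  "is_distribution X nu \<longleftrightarrow>
     (\<forall>r \<in> lin_orders X. nu r \<ge> 0) \<and> (\<Sum>r \<in> lin_orders X. nu r) = 1"

text \<open>t x r r' is the probability of r' given consumption x under r.\<close>
definition is_transition :: "'a set \<Rightarrow> ('a \<Rightarrow> 'a rel \<Rightarrow> 'a rel \<Rightarrow> real) \<Rightarrow> bool" where
  "is_transition X t \<longleftrightarrow>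
     (\<forall>x \<in> X. \<forall>r \<in> lin_orders X. is_distribution X (t x r))"

definition consistent_with_CDRU ::
  "'a set \<Rightarrow> ('a \<Rightarrow> 'a \<Rightarrow> 'a set \<Rightarrow> 'a set \<Rightarrow> real) \<Rightarrow> bool" where
  "consistent_with_CDRU X p \<longleftrightarrow>
     (\<exists>nu t. is_distribution X nu \<and> is_transition X t \<and>
        (\<forall>A \<in> nonempty_subsets X. \<forall>B \<in> nonempty_subsets X. \<forall>x \<in> A. \<forall>y \<in> B.
           p x y A B = (\<Sum>r \<in> N_set X x A. \<Sum>r' \<in> N_set X y B. nu r * t x r r')))"

end

(* In a consumption dependent random utility model the first-period order is drawn from nu and,
   once x has been consumed, the second-period order is drawn from t(x, >).  The Moebius inverse
   q(x,y,A,B) is then the probability that x together with the items ranked below it is exactly A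
   in the first order, and that y together with the items below it is exactly B in the second.
   This gives complete monotonicity, and summing out the second choice gives marginality.

   Conversely, marginality makes the first-period Block-Marschak polynomials
   q(x,A) = sum_y q(x,y,A,X) satisfy Falmagne's flow conditions, so they are realised by a
   distribution nu over linear orders.  For fixed x and A, the polynomials
   q(x,.,A,.) satisfy the same flow conditions with total mass q(x,A); the distribution that
   realises them after normalisation serves as t(x, >) for every order > in which the lower set
   of x is A.  Moebius inversion then recovers p. *)

theory Submission
  imports Defs "HOL-Combinatorics.Multiset_Permutations"
begin

section \<open>Moebius inversion on intervals of sets\<close>

lemma finite_set_interval [simp]: "finite S \<Longrightarrow> finite {U..S :: 'a set}"
  by (rule finite_subset[of _ "Pow S"]) auto

lemma sum_neg_one_power_card_interval:
  assumes "finite S" "U \<subseteq> S"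
  shows "(\<Sum>T\<in>{U..S}. (-1::real) ^ card T) = (if U = S then (-1) ^ card S else 0)"
proof (cases "U = S")
  case False
  then have "U \<subset> S" using assms(2) by blast
  then have "card {T \<in> {U..S}. even (card T)} = card {T \<in> {U..S}. odd (card T)}"
    using card_subsupersets_even_odd[OF assms(1) \<open>U \<subset> S\<close>]
    by (simp only: atLeastAtMost_iff conj_commute conj_left_commute)
  then show ?thesis
    using False assms(1) by (simp add: sum_alternating_cancels)
qed simp

lemma neg_one_power_card_diff:
  assumes "finite T" "U \<subseteq> T"
  shows "(-1::real) ^ card (T - U) = (-1) ^ card T * (-1) ^ card U"
  using assms by (simp add: card_Diff_subset card_mono finite_subset
      flip: neg_one_power_add_eq_neg_one_power_diff power_add)

lemma sum_neg_one_power_card_diff_lower: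
  assumes "finite S" "U \<subseteq> S"
  shows "(\<Sum>T\<in>{U..S}. (-1::real) ^ card (T - U)) = (if U = S then 1 else 0)"
proof -
  have "(\<Sum>T\<in>{U..S}. (-1::real) ^ card (T - U)) = (-1) ^ card U * (\<Sum>T\<in>{U..S}. (-1) ^ card T)"
    using assms
    by (auto simp: sum_distrib_left neg_one_power_card_diff finite_subset intro!: sum.cong)
  then show ?thesis
    using assms by (simp add: sum_neg_one_power_card_interval flip: power_add)
qed

lemma sum_neg_one_power_card_diff_upper:
  assumes "finite S" "U \<subseteq> S"
  shows "(\<Sum>T\<in>{U..S}. (-1::real) ^ card (S - T)) = (if U = S then 1 else 0)"
proof -
  have "(\<Sum>T\<in>{U..S}. (-1::real) ^ card (S - T)) = (-1) ^ card S * (\<Sum>T\<in>{U..S}. (-1) ^ card T)"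
    using assms by (auto simp: sum_distrib_left neg_one_power_card_diff intro!: sum.cong)
  then show ?thesis
    using assms by (simp add: sum_neg_one_power_card_interval flip: power_add)
qed

lemma sum_interval_swap:
  assumes "finite X"
  shows "(\<Sum>A'\<in>{A..X}. \<Sum>A''\<in>{A'..X}. g A' A'') = (\<Sum>A''\<in>{A..X}. \<Sum>A'\<in>{A..A''}. g A' A'')"
proof -
  have upper: "{A'..X} = {A''\<in>{A..X}. A' \<subseteq> A''}" if "A' \<in> {A..X}" for A'
    using that by auto blast
  have lower: "{A'\<in>{A..X}. A' \<subseteq> A''} = {A..A''}" if "A'' \<in> {A..X}" for A''
    using that by auto blast
  have "(\<Sum>A'\<in>{A..X}. \<Sum>A''\<in>{A'..X}. g A' A'') = (\<Sum>A'\<in>{A..X}. \<Sum>A''\<in>{A''\<in>{A..X}. A' \<subseteq> A''}. g A' A'')"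
    by (simp only: upper cong: sum.cong)
  also have "\<dots> = (\<Sum>A''\<in>{A..X}. \<Sum>A'\<in>{A'\<in>{A..X}. A' \<subseteq> A''}. g A' A'')"
    using assms by (intro sum.swap_restrict) auto
  also have "\<dots> = (\<Sum>A''\<in>{A..X}. \<Sum>A'\<in>{A..A''}. g A' A'')"
    by (simp only: lower cong: sum.cong)
  finally show ?thesis .
qed

definition moebius :: "'a set \<Rightarrow> ('a set \<Rightarrow> real) \<Rightarrow> 'a set \<Rightarrow> real" where
  "moebius X f A = (\<Sum>A'\<in>{A..X}. (-1) ^ card (A' - A) * f A')"

lemma moebius_top [simp]: "moebius X f X = f X"
  by (simp add: moebius_def)

lemma moebius_cong:
  "(\<And>A'. A \<subseteq> A' \<Longrightarrow> A' \<subseteq> X \<Longrightarrow> f A' = g A') \<Longrightarrow> moebius X f A = moebius X g A"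
  unfolding moebius_def by (intro sum.cong) auto

lemma moebius_sum: "moebius X (\<lambda>A'. \<Sum>i\<in>I. f i A') A = (\<Sum>i\<in>I. moebius X (f i) A)"
  unfolding moebius_def by (simp add: sum_distrib_left sum.swap[of _ I])

lemma sum_moebius:
  assumes "finite X" "A \<subseteq> X"
  shows "(\<Sum>A'\<in>{A..X}. moebius X f A') = f A"
proof -
  have "(\<Sum>A'\<in>{A..X}. moebius X f A')
      = (\<Sum>A''\<in>{A..X}. (\<Sum>A'\<in>{A..A''}. (-1) ^ card (A'' - A')) * f A'')"
    unfolding moebius_def using assms(1)
    by (simp add: sum_interval_swap sum_distrib_right)
  also have "\<dots> = (\<Sum>A''\<in>{A..X}. if A = A'' then f A'' else 0)"
    using assms by (intro sum.cong refl)
      (simp add: sum_neg_one_power_card_diff_upper finite_subset[OF _ assms(1)])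
  also have "\<dots> = f A"
    using assms by simp
  finally show ?thesis .
qed

lemma moebius_sum_interval:
  assumes "finite X" "A \<subseteq> X"
  shows "moebius X (\<lambda>A'. \<Sum>A''\<in>{A'..X}. f A'') A = f A"
proof -
  have "moebius X (\<lambda>A'. \<Sum>A''\<in>{A'..X}. f A'') A
      = (\<Sum>A''\<in>{A..X}. (\<Sum>A'\<in>{A..A''}. (-1) ^ card (A' - A)) * f A'')"
    unfolding moebius_def using assms(1)
    by (simp add: sum_distrib_left sum_distrib_right sum_interval_swap mult.commute)
  also have "\<dots> = (\<Sum>A''\<in>{A..X}. if A = A'' then f A'' else 0)"
    using assms by (intro sum.cong refl)
      (simp add: sum_neg_one_power_card_diff_lower finite_subset[OF _ assms(1)])
  also have "\<dots> = f A"
    using assms by simp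
  finally show ?thesis .
qed

lemma moebius_insert:
  assumes "finite X" "y \<in> X - A"
  shows "moebius X f (insert y A) = - (\<Sum>A'\<in>{A'\<in>{A..X}. y \<in> A'}. (-1) ^ card (A' - A) * f A')"
proof -
  have "{insert y A..X} = {A'\<in>{A..X}. y \<in> A'}"
    using assms by auto
  moreover have "(-1) ^ card (A' - insert y A) * f A' = - ((-1) ^ card (A' - A) * f A')"
    if "A' \<in> {A'\<in>{A..X}. y \<in> A'}" for A'
  proof -
    have "finite (A' - A)" "y \<in> A' - A"
      using that assms finite_subset by auto
    moreover have "A' - insert y A = (A' - A) - {y}"
      by blast
    ultimately have "card (A' - A) = Suc (card (A' - insert y A))"
      by (simp only: card_Suc_Diff1)
    then show ?thesis
      by simp
  qed
  ultimately show ?thesis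
    unfolding moebius_def sum_negf[symmetric] by (rule sum.cong)
qed

lemma sum_moebius_flow:
  assumes "finite X" "A \<subseteq> X" "A \<noteq> {}" "A \<noteq> X"
    and total: "\<And>B. B \<subseteq> X \<Longrightarrow> B \<noteq> {} \<Longrightarrow> (\<Sum>x\<in>B. m x B) = c"
  shows "(\<Sum>x\<in>A. moebius X (m x) A) = (\<Sum>y\<in>X - A. moebius X (m y) (insert y A))"
proof -
  let ?s = "\<lambda>A'. (-1::real) ^ card (A' - A)"
  have "(\<Sum>y\<in>X - A. moebius X (m y) (insert y A))
      = - (\<Sum>y\<in>X - A. \<Sum>A'\<in>{A'\<in>{A..X}. y \<in> A'}. ?s A' * m y A')"
    using assms(1) by (simp add: moebius_insert sum_negf)
  also have "\<dots> = - (\<Sum>A'\<in>{A..X}. \<Sum>y\<in>{y\<in>X - A. y \<in> A'}. ?s A' * m y A')"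
    using assms(1) by (subst sum.swap_restrict) auto
  also have "\<dots> = - (\<Sum>A'\<in>{A..X}. ?s A' * (\<Sum>y\<in>A' - A. m y A'))"
    by (intro arg_cong[where f = uminus] sum.cong refl)
      (auto simp: sum_distrib_left intro: sum.cong)
  finally have rhs: "(\<Sum>y\<in>X - A. moebius X (m y) (insert y A))
      = - (\<Sum>A'\<in>{A..X}. ?s A' * (\<Sum>y\<in>A' - A. m y A'))" .
  have "(\<Sum>x\<in>A. moebius X (m x) A) - (\<Sum>y\<in>X - A. moebius X (m y) (insert y A))
      = (\<Sum>A'\<in>{A..X}. ?s A' * ((\<Sum>x\<in>A. m x A') + (\<Sum>y\<in>A' - A. m y A')))"
    unfolding rhs
    by (simp add: moebius_def sum.swap[of _ A] sum_distrib_left distrib_left sum.distrib)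
  also have "\<dots> = (\<Sum>A'\<in>{A..X}. ?s A' * c)"
  proof (rule sum.cong[OF refl])
    fix A' assume A': "A' \<in> {A..X}"
    then have "(\<Sum>x\<in>A. m x A') + (\<Sum>y\<in>A' - A. m y A') = (\<Sum>x\<in>A'. m x A')"
      using assms(1) finite_subset by (subst sum.subset_diff[of A A']) auto
    also have "\<dots> = c"
      using A' assms(3) by (intro total) auto
    finally show "?s A' * ((\<Sum>x\<in>A. m x A') + (\<Sum>y\<in>A' - A. m y A')) = ?s A' * c"
      by simp
  qed
  also have "\<dots> = 0"
    using assms(1,2,4) by (simp add: sum_distrib_right[symmetric] sum_neg_one_power_card_diff_lower)
  finally show ?thesis
    by simp
qed

lemma Collect_subset_between: "{A'. A \<subseteq> A' \<and> A' \<subseteq> X} = {A..X}"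
  by auto

lemma moebius_inverse_iterated:
  "moebius_inverse X p x y A B = moebius X (\<lambda>A'. moebius X (\<lambda>B'. p x y A' B') B) A"
  "moebius_inverse X p x y A B = moebius X (\<lambda>B'. moebius X (\<lambda>A'. p x y A' B') A) B"
  unfolding moebius_inverse_def moebius_def Collect_subset_between
  by (simp_all add: sum_distrib_left power_add mult_ac sum.swap[of _ "{B..X}"])

lemma moebius_inverse_eqI:
  assumes "finite X" "A \<subseteq> X" "B \<subseteq> X"
    and p: "\<And>A' B'. A' \<in> {A..X} \<Longrightarrow> B' \<in> {B..X} \<Longrightarrow>
      p x y A' B' = (\<Sum>A''\<in>{A'..X}. \<Sum>B''\<in>{B'..X}. h A'' B'')"
  shows "moebius_inverse X p x y A B = h A B"
proof -
  have "moebius X (\<lambda>B'. p x y A' B') B = (\<Sum>A''\<in>{A'..X}. h A'' B)" if "A' \<in> {A..X}" for A'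
  proof -
    have "moebius X (\<lambda>B'. p x y A' B') B
        = moebius X (\<lambda>B'. \<Sum>A''\<in>{A'..X}. \<Sum>B''\<in>{B'..X}. h A'' B'') B"
      using that by (intro moebius_cong p) auto
    also have "\<dots> = (\<Sum>A''\<in>{A'..X}. h A'' B)"
      using assms(1,3) by (simp add: moebius_sum moebius_sum_interval)
    finally show ?thesis .
  qed
  then have "moebius_inverse X p x y A B = moebius X (\<lambda>A'. \<Sum>A''\<in>{A'..X}. h A'' B) A"
    unfolding moebius_inverse_iterated(1) by (intro moebius_cong) auto
  also have "\<dots> = h A B"
    using assms(1,2) by (rule moebius_sum_interval)
  finally show ?thesis .
qed

section \<open>Linear orders, lower sets and permutations\<close>

definition down_set :: "'a rel \<Rightarrow> 'a \<Rightarrow> 'a set" where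
  "down_set r x = insert x (r `` {x})"

lemma finite_lin_orders: "finite X \<Longrightarrow> finite (lin_orders X)"
  by (rule finite_subset[of _ "Pow (X \<times> X)"]) (auto simp: lin_orders_def)

lemma self_in_down_set [simp]: "x \<in> down_set r x"
  by (simp add: down_set_def)

lemma down_set_subset: "r \<in> lin_orders X \<Longrightarrow> x \<in> X \<Longrightarrow> down_set r x \<subseteq> X"
  by (auto simp: down_set_def lin_orders_def)

lemma finite_N_set: "finite X \<Longrightarrow> finite (N_set X x A)"
  by (rule finite_subset[OF _ finite_lin_orders]) (auto simp: N_set_def)

lemma N_set_iff_down_set:
  "x \<in> A \<Longrightarrow> r \<in> N_set X x A \<longleftrightarrow> r \<in> lin_orders X \<and> A \<subseteq> down_set r x"
  by (auto simp: N_set_def down_set_def)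

lemma sum_N_set_by_down_set:
  assumes "finite X" "A \<subseteq> X" "x \<in> A"
  shows "(\<Sum>r\<in>N_set X x A. g r) = (\<Sum>A'\<in>{A..X}. \<Sum>r\<in>{r\<in>lin_orders X. down_set r x = A'}. g r)"
proof -
  have "down_set r x \<in> {A..X}" if "r \<in> N_set X x A" for r
    using that assms down_set_subset[of r X x] by (auto simp: N_set_iff_down_set)
  then have "(\<Sum>r\<in>N_set X x A. g r)
      = (\<Sum>A'\<in>{A..X}. \<Sum>r\<in>{r\<in>N_set X x A. down_set r x = A'}. g r)"
    using assms(1) by (intro sum.group[symmetric]) (auto simp: finite_N_set)
  also have "\<dots> = (\<Sum>A'\<in>{A..X}. \<Sum>r\<in>{r\<in>lin_orders X. down_set r x = A'}. g r)"
    using assms(3)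
    by (intro sum.cong refl arg_cong[where f = "sum g"]) (auto simp: N_set_iff_down_set)
  finally show ?thesis .
qed

lemma lin_orders_has_top:
  assumes "r \<in> lin_orders X" "B \<subseteq> X" "finite B" "B \<noteq> {}"
  shows "\<exists>y\<in>B. \<forall>z\<in>B - {y}. (y, z) \<in> r"
  using assms(3,4,2)
proof (induction B rule: finite_ne_induct)
  case (insert a B)
  then obtain y where y: "y \<in> B" "\<forall>z\<in>B - {y}. (y, z) \<in> r"
    by auto
  have "trans r" "total_on X r"
    using assms(1) by (auto simp: lin_orders_def strict_linear_order_on_def)
  moreover have "a \<noteq> y" "a \<in> X" "y \<in> X"
    using insert y by auto
  ultimately consider "(a, y) \<in> r" | "(y, a) \<in> r"
    by (auto simp: total_on_def)
  then show ?case
  proof cases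
    case 1
    then show ?thesis
      using y \<open>trans r\<close> by (metis Diff_iff insertCI insertE transD)
  next
    case 2
    then show ?thesis
      using y by blast
  qed
qed auto

lemma sum_N_set_partition:
  assumes "finite X" "B \<subseteq> X" "B \<noteq> {}"
  shows "(\<Sum>y\<in>B. \<Sum>r\<in>N_set X y B. g r) = (\<Sum>r\<in>lin_orders X. g r)"
proof -
  have "finite B"
    using assms finite_subset by auto
  have "lin_orders X = (\<Union>y\<in>B. N_set X y B)"
    using lin_orders_has_top[OF _ assms(2) \<open>finite B\<close> assms(3)] by (auto simp: N_set_def)
  moreover have "N_set X y B \<inter> N_set X y' B = {}" if "y \<in> B" "y' \<in> B" "y \<noteq> y'" for y y'
    using that by (auto simp: N_set_def lin_orders_def strict_linear_order_on_def irrefl_def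
        dest: transD)
  ultimately show ?thesis
    using \<open>finite B\<close> assms(1) by (simp add: sum.UNION_disjoint finite_N_set)
qed

primrec order_of_list :: "'a list \<Rightarrow> 'a rel" where
  "order_of_list [] = {}"
| "order_of_list (x # xs) = {x} \<times> set xs \<union> order_of_list xs"

lemma order_of_list_subset: "order_of_list xs \<subseteq> set xs \<times> set xs"
  by (induction xs) auto

lemma order_of_list_append:
  "order_of_list (ys @ zs) = order_of_list ys \<union> set ys \<times> set zs \<union> order_of_list zs"
  by (induction ys) auto

lemma strict_linear_order_on_order_of_list:
  "distinct xs \<Longrightarrow> strict_linear_order_on (set xs) (order_of_list xs)"
proof (induction xs)
  case (Cons x xs)
  then show ?case
    using order_of_list_subset[of xs]
    by (auto simp: strict_linear_order_on_def trans_def irrefl_def total_on_def)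
qed (simp add: strict_linear_order_on_def trans_def irrefl_def total_on_def)

lemma order_of_list_in_lin_orders:
  "xs \<in> permutations_of_set X \<Longrightarrow> order_of_list xs \<in> lin_orders X"
  using strict_linear_order_on_order_of_list order_of_list_subset
  by (auto simp: lin_orders_def permutations_of_set_def)

lemma sum_lin_orders_order_of_list:
  assumes "finite X"
  shows "(\<Sum>r\<in>{r\<in>lin_orders X. P r}. \<Sum>xs\<in>{xs\<in>permutations_of_set X. order_of_list xs = r}. f xs)
    = (\<Sum>xs\<in>{xs\<in>permutations_of_set X. P (order_of_list xs)}. f xs)"
proof -
  let ?S = "{xs\<in>permutations_of_set X. P (order_of_list xs)}"
  have "{xs\<in>permutations_of_set X. order_of_list xs = r} = {xs\<in>?S. order_of_list xs = r}"
    if "r \<in> {r\<in>lin_orders X. P r}" for r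
    using that by auto
  then have "(\<Sum>r\<in>{r\<in>lin_orders X. P r}. \<Sum>xs\<in>{xs\<in>permutations_of_set X. order_of_list xs = r}. f xs)
      = (\<Sum>r\<in>{r\<in>lin_orders X. P r}. \<Sum>xs\<in>{xs\<in>?S. order_of_list xs = r}. f xs)"
    by (simp only: cong: sum.cong)
  also have "\<dots> = (\<Sum>xs\<in>?S. f xs)"
    using assms by (intro sum.group) (auto simp: finite_lin_orders order_of_list_in_lin_orders)
  finally show ?thesis .
qed

lemma down_set_order_of_list:
  "distinct (ys @ x # zs) \<Longrightarrow> down_set (order_of_list (ys @ x # zs)) x = insert x (set zs)"
  using order_of_list_subset[of ys] order_of_list_subset[of zs]
  by (auto simp: down_set_def order_of_list_append)

lemma sum_permutations_of_set_Cons: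
  assumes "finite C" "C \<noteq> {}"
  shows "(\<Sum>xs\<in>permutations_of_set C. g xs)
    = (\<Sum>y\<in>C. \<Sum>xs\<in>permutations_of_set (C - {y}). g (y # xs))"
proof -
  have "(\<Sum>xs\<in>permutations_of_set C. g xs)
      = (\<Sum>y\<in>C. \<Sum>xs\<in>(\<lambda>xs. y # xs) ` permutations_of_set (C - {y}). g xs)"
    unfolding permutations_of_set_nonempty[OF assms(2)] using assms(1)
    by (rule sum.UNION_disjoint) auto
  then show ?thesis
    by (simp add: sum.reindex)
qed

lemma sum_permutations_of_set_snoc:
  assumes "finite C" "C \<noteq> {}"
  shows "(\<Sum>xs\<in>permutations_of_set C. g xs)
    = (\<Sum>y\<in>C. \<Sum>xs\<in>permutations_of_set (C - {y}). g (xs @ [y]))"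
proof -
  have "(\<Sum>xs\<in>permutations_of_set C. g xs) = (\<Sum>xs\<in>permutations_of_set C. g (rev xs))"
    by (rule sum.reindex_bij_witness[of _ rev rev]) (auto simp: permutations_of_set_def)
  also have "\<dots> = (\<Sum>y\<in>C. \<Sum>xs\<in>permutations_of_set (C - {y}). g (rev xs @ [y]))"
    using sum_permutations_of_set_Cons[OF assms, of "\<lambda>xs. g (rev xs)"] by simp
  also have "\<dots> = (\<Sum>y\<in>C. \<Sum>xs\<in>permutations_of_set (C - {y}). g (xs @ [y]))"
    by (rule sum.cong[OF refl], rule sum.reindex_bij_witness[of _ rev rev])
      (auto simp: permutations_of_set_def)
  finally show ?thesis .
qed

lemma permutations_of_set_with_down_set:
  assumes "A \<subseteq> X" "x \<in> A"
  shows "{xs\<in>permutations_of_set X. down_set (order_of_list xs) x = A}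
    = (\<lambda>(ys, zs). ys @ x # zs) ` (permutations_of_set (X - A) \<times> permutations_of_set (A - {x}))"
    (is "?L = ?R")
proof
  show "?L \<subseteq> ?R"
  proof
    fix xs assume "xs \<in> ?L"
    then have xs: "distinct xs" "set xs = X" "down_set (order_of_list xs) x = A"
      by (auto simp: permutations_of_set_def)
    then obtain ys zs where split: "xs = ys @ x # zs"
      using assms by (metis in_mono split_list)
    then have "insert x (set zs) = A"
      using xs by (simp add: down_set_order_of_list)
    then have "ys \<in> permutations_of_set (X - A)" "zs \<in> permutations_of_set (A - {x})"
      using xs split by (auto simp: permutations_of_set_def)
    then show "xs \<in> ?R"
      using split by force
  qed
next
  show "?R \<subseteq> ?L"
  proof
    fix xs assume "xs \<in> ?R"
    then obtain ys zs where split: "xs = ys @ x # zs"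
      and "ys \<in> permutations_of_set (X - A)" "zs \<in> permutations_of_set (A - {x})"
      by auto
    then have "distinct xs" "set xs = X" "insert x (set zs) = A"
      using assms by (auto simp: permutations_of_set_def)
    then show "xs \<in> ?L"
      using split by (auto simp: down_set_order_of_list)
  qed
qed

lemma inj_on_append_Cons_permutations:
  assumes "x \<in> A"
  shows "inj_on (\<lambda>(ys, zs). ys @ x # zs)
    (permutations_of_set (X - A) \<times> permutations_of_set (A - {x}))"
  using assms by (intro inj_onI) (auto simp: permutations_of_set_def append_Cons_eq_iff)

section \<open>Realising a flow by a distribution over linear orders\<close>

text \<open>Here \<open>q x A\<close> is to become the probability that the items ranked weakly below \<open>x\<close>
  form exactly \<open>A\<close>.  The order is drawn from the top: when the still unranked items form \<open>A\<close>,
  the next item is \<open>x\<close> with probability \<open>choice_prob x A\<close>; \<open>mass A\<close> turns out to be the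
  probability of reaching \<open>A\<close>, and \<open>list_weight E xs\<close> is the probability of drawing \<open>xs\<close>
  (top first) when the unranked items are \<open>set xs \<union> E\<close>.\<close>

locale choice_flow =
  fixes X :: "'a set" and q :: "'a \<Rightarrow> 'a set \<Rightarrow> real"
  assumes finite_X: "finite X"
    and nonneg: "\<And>x A. A \<subseteq> X \<Longrightarrow> x \<in> A \<Longrightarrow> q x A \<ge> 0"
    and total: "(\<Sum>x\<in>X. q x X) = 1"
    and flow: "\<And>A. A \<subseteq> X \<Longrightarrow> A \<noteq> {} \<Longrightarrow> A \<noteq> X \<Longrightarrow>
      (\<Sum>x\<in>A. q x A) = (\<Sum>y\<in>X - A. q y (insert y A))"
begin

definition mass :: "'a set \<Rightarrow> real" where
  "mass A = (\<Sum>x\<in>A. q x A)"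

definition choice_prob :: "'a \<Rightarrow> 'a set \<Rightarrow> real" where
  "choice_prob x A = q x A / mass A"

primrec list_weight :: "'a set \<Rightarrow> 'a list \<Rightarrow> real" where
  "list_weight E [] = 1"
| "list_weight E (x # xs) = choice_prob x (insert x (set xs \<union> E)) * list_weight E xs"

lemma mass_nonneg: "A \<subseteq> X \<Longrightarrow> mass A \<ge> 0"
  unfolding mass_def by (intro sum_nonneg nonneg) auto

lemma mass_mult_choice_prob:
  assumes "A \<subseteq> X" "x \<in> A"
  shows "mass A * choice_prob x A = q x A"
proof (cases "mass A = 0")
  case True
  have "q x A \<le> mass A"
    unfolding mass_def using assms finite_X finite_subset
    by (intro member_le_sum nonneg) auto
  then show ?thesis
    using True nonneg[OF assms] by (simp add: choice_prob_def)
qed (simp add: choice_prob_def)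

lemma choice_prob_nonneg: "A \<subseteq> X \<Longrightarrow> x \<in> A \<Longrightarrow> choice_prob x A \<ge> 0"
  unfolding choice_prob_def by (simp add: mass_nonneg nonneg)

lemma mass_Diff_pos:
  assumes "B \<subseteq> X" "x \<in> B" "q x B > 0" "B - {x} \<noteq> {}"
  shows "mass (B - {x}) > 0"
proof -
  have "q x B = q x (insert x (B - {x}))"
    using assms(2) by (simp add: insert_absorb)
  also have "\<dots> \<le> (\<Sum>y\<in>X - (B - {x}). q y (insert y (B - {x})))"
    using assms finite_X by (intro member_le_sum nonneg) auto
  also have "\<dots> = mass (B - {x})"
    unfolding mass_def using assms by (intro flow[symmetric]) auto
  finally show ?thesis
    using assms(3) by simp
qed

lemma list_weight_nonneg: "set xs \<union> E \<subseteq> X \<Longrightarrow> list_weight E xs \<ge> 0"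
  by (induction xs) (auto simp: choice_prob_nonneg)

lemma list_weight_append: "list_weight E (ys @ zs) = list_weight (set zs \<union> E) ys * list_weight E zs"
  by (induction ys) (auto simp: Un_assoc)

lemma sum_list_weight_Cons:
  assumes "y \<in> B"
  shows "(\<Sum>xs\<in>permutations_of_set (B - {y}). list_weight {} (y # xs))
    = choice_prob y B * (\<Sum>xs\<in>permutations_of_set (B - {y}). list_weight {} xs)"
  using assms
  by (auto simp: sum_distrib_left permutations_of_set_def insert_absorb intro!: sum.cong)

lemma sum_list_weight_permutations:
  assumes "B \<subseteq> X" "B \<noteq> {}" "mass B > 0"
  shows "(\<Sum>xs\<in>permutations_of_set B. list_weight {} xs) = 1"
  using assms
proof (induction "card B" arbitrary: B rule: less_induct)
  case less
  have "finite B"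
    using less.prems finite_X finite_subset by auto
  have step: "choice_prob y B * (\<Sum>xs\<in>permutations_of_set (B - {y}). list_weight {} xs)
      = choice_prob y B"
    if y: "y \<in> B" for y
  proof (cases "q y B > 0 \<and> B - {y} \<noteq> {}")
    case True
    have "(\<Sum>xs\<in>permutations_of_set (B - {y}). list_weight {} xs) = 1"
    proof (rule less.hyps)
      show "card (B - {y}) < card B"
        using \<open>finite B\<close> y by (rule card_Diff1_less)
      show "mass (B - {y}) > 0"
        using less.prems(1) y True by (intro mass_Diff_pos) auto
    qed (use less.prems(1) True in auto)
    then show ?thesis
      by simp
  next
    case False
    then consider "q y B = 0" | "B - {y} = {}"
      using nonneg[OF less.prems(1) y] by linarith
    then show ?thesis
      by cases (simp add: choice_prob_def, simp only: permutations_of_set_empty, simp)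
  qed
  have "(\<Sum>xs\<in>permutations_of_set B. list_weight {} xs)
      = (\<Sum>y\<in>B. \<Sum>xs\<in>permutations_of_set (B - {y}). list_weight {} (y # xs))"
    using \<open>finite B\<close> less.prems(2) by (rule sum_permutations_of_set_Cons)
  also have "\<dots> = (\<Sum>y\<in>B. choice_prob y B)"
    by (simp add: sum_list_weight_Cons step del: list_weight.simps)
  also have "\<dots> = 1"
    using less.prems(3) by (simp add: choice_prob_def mass_def flip: sum_divide_distrib)
  finally show ?case .
qed

lemma sum_list_weight_above:
  assumes "A \<subseteq> X" "A \<noteq> {}"
  shows "(\<Sum>ys\<in>permutations_of_set (X - A). list_weight A ys) = mass A"
  using assms
proof (induction "card (X - A)" arbitrary: A rule: less_induct)
  case less
  show ?case
  proof (cases "A = X")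
    case True
    then show ?thesis
      using total by (simp add: mass_def)
  next
    case False
    have "(\<Sum>ys\<in>permutations_of_set (X - A - {y}). list_weight A (ys @ [y])) = q y (insert y A)"
      if "y \<in> X - A" for y
    proof -
      have "X - A - {y} = X - insert y A"
        by auto
      moreover have "card (X - insert y A) < card (X - A)"
        using that finite_X by (intro psubset_card_mono) auto
      then have "(\<Sum>ys\<in>permutations_of_set (X - insert y A). list_weight (insert y A) ys)
          = mass (insert y A)"
        using that less.prems by (intro less.hyps) auto
      ultimately show ?thesis
        using that less.prems
        by (simp add: list_weight_append mass_mult_choice_prob flip: sum_distrib_right)
    qed
    then have "(\<Sum>ys\<in>permutations_of_set (X - A). list_weight A ys) = (\<Sum>y\<in>X - A. q y (insert y A))"
      using sum_permutations_of_set_snoc[of "X - A" "list_weight A"] False less.prems finite_X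
      by auto
    also have "\<dots> = mass A"
      unfolding mass_def using less.prems False by (intro flow[symmetric]) auto
    finally show ?thesis .
  qed
qed

lemma sum_list_weight_below:
  assumes "A \<subseteq> X" "x \<in> A" "q x A > 0"
  shows "(\<Sum>zs\<in>permutations_of_set (A - {x}). list_weight {} zs) = 1"
proof (cases "A - {x} = {}")
  case True
  then show ?thesis
    by (simp only: permutations_of_set_empty) simp
next
  case False
  then show ?thesis
    using assms by (intro sum_list_weight_permutations mass_Diff_pos) auto
qed

lemma sum_list_weight_down_set:
  assumes "A \<subseteq> X" "x \<in> A"
  shows "(\<Sum>xs\<in>{xs\<in>permutations_of_set X. down_set (order_of_list xs) x = A}. list_weight {} xs)
    = q x A"
proof -
  let ?below = "\<Sum>zs\<in>permutations_of_set (A - {x}). list_weight {} zs"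
  let ?above = "\<Sum>ys\<in>permutations_of_set (X - A). list_weight A ys"
  have "(\<Sum>xs\<in>{xs\<in>permutations_of_set X. down_set (order_of_list xs) x = A}. list_weight {} xs)
      = (\<Sum>ys\<in>permutations_of_set (X - A). \<Sum>zs\<in>permutations_of_set (A - {x}).
           list_weight {} (ys @ x # zs))"
    unfolding permutations_of_set_with_down_set[OF assms]
      sum.reindex[OF inj_on_append_Cons_permutations[OF assms(2)]]
    by (simp add: sum.cartesian_product comp_def split_def)
  also have "\<dots> = (\<Sum>ys\<in>permutations_of_set (X - A). \<Sum>zs\<in>permutations_of_set (A - {x}).
           list_weight A ys * (choice_prob x A * list_weight {} zs))"
    using assms by (intro sum.cong refl)
      (simp add: list_weight_append permutations_of_set_def insert_absorb)
  also have "\<dots> = ?above * (choice_prob x A * ?below)"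
    by (simp only: sum_distrib_left[of "choice_prob x A"] sum_product)
  also have "\<dots> = q x A * ?below"
  proof -
    have "?above = mass A"
      using assms by (intro sum_list_weight_above) auto
    then show ?thesis
      using mass_mult_choice_prob[OF assms] by (simp flip: mult.assoc)
  qed
  also have "\<dots> = q x A"
    using nonneg[OF assms] sum_list_weight_below[OF assms] by force
  finally show ?thesis .
qed

theorem exists_lin_orders_distribution:
  "\<exists>\<nu>. is_distribution X \<nu> \<and>
     (\<forall>A x. A \<subseteq> X \<longrightarrow> x \<in> A \<longrightarrow> (\<Sum>r\<in>{r\<in>lin_orders X. down_set r x = A}. \<nu> r) = q x A)"
proof (intro exI conjI allI impI)
  define \<nu> where
    "\<nu> r = (\<Sum>xs\<in>{xs\<in>permutations_of_set X. order_of_list xs = r}. list_weight {} xs)" for r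
  have group: "(\<Sum>r\<in>{r\<in>lin_orders X. P r}. \<nu> r)
      = (\<Sum>xs\<in>{xs\<in>permutations_of_set X. P (order_of_list xs)}. list_weight {} xs)" for P
    unfolding \<nu>_def using finite_X by (rule sum_lin_orders_order_of_list)
  have "X \<noteq> {}"
    using total by auto
  then have "(\<Sum>r\<in>lin_orders X. \<nu> r) = 1"
    using group[of "\<lambda>_. True"] sum_list_weight_permutations[of X] total by (simp add: mass_def)
  moreover have "\<nu> r \<ge> 0" for r
    unfolding \<nu>_def by (intro sum_nonneg list_weight_nonneg) (auto simp: permutations_of_set_def)
  ultimately show "is_distribution X \<nu>"
    by (simp add: is_distribution_def)
  fix A x assume "A \<subseteq> X" "x \<in> A"
  then show "(\<Sum>r\<in>{r\<in>lin_orders X. down_set r x = A}. \<nu> r) = q x A"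
    by (simp add: group sum_list_weight_down_set)
qed

end

section \<open>Necessity\<close>

lemma sum_CDRU_second_choice:
  assumes "finite X" "is_transition X t" "x \<in> X" "B \<subseteq> X" "B \<noteq> {}"
  shows "(\<Sum>y\<in>B. \<Sum>r\<in>N_set X x A. \<Sum>r'\<in>N_set X y B. \<nu> r * t x r r') = (\<Sum>r\<in>N_set X x A. \<nu> r)"
proof -
  have "(\<Sum>r'\<in>lin_orders X. t x r r') = 1" if "r \<in> N_set X x A" for r
    using assms(2,3) that by (auto simp: is_transition_def is_distribution_def N_set_def)
  moreover have "(\<Sum>y\<in>B. \<Sum>r\<in>N_set X x A. \<Sum>r'\<in>N_set X y B. \<nu> r * t x r r')
      = (\<Sum>r\<in>N_set X x A. \<nu> r * (\<Sum>y\<in>B. \<Sum>r'\<in>N_set X y B. t x r r'))"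
    by (simp add: sum.swap[of _ B] sum_distrib_left)
  ultimately show ?thesis
    using assms(1,4,5) by (simp add: sum_N_set_partition)
qed

lemma moebius_inverse_CDRU:
  assumes "finite X" "x \<in> A" "A \<subseteq> X" "y \<in> B" "B \<subseteq> X"
    and rep: "\<And>A' B'. A' \<in> {A..X} \<Longrightarrow> B' \<in> {B..X} \<Longrightarrow>
      p x y A' B' = (\<Sum>r\<in>N_set X x A'. \<Sum>r'\<in>N_set X y B'. \<nu> r * t x r r')"
  shows "moebius_inverse X p x y A B =
    (\<Sum>r\<in>{r\<in>lin_orders X. down_set r x = A}.
      \<Sum>r'\<in>{r'\<in>lin_orders X. down_set r' y = B}. \<nu> r * t x r r')"
proof (rule moebius_inverse_eqI[OF assms(1,3,5)])
  fix A' B' assume A': "A' \<in> {A..X}" and B': "B' \<in> {B..X}"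
  then have "x \<in> A'" "A' \<subseteq> X" "y \<in> B'" "B' \<subseteq> X"
    using assms by auto
  then have "p x y A' B' = (\<Sum>r\<in>N_set X x A'. \<Sum>B''\<in>{B'..X}.
      \<Sum>r'\<in>{r'\<in>lin_orders X. down_set r' y = B''}. \<nu> r * t x r r')"
    using assms(1) by (simp add: rep[OF A' B'] sum_N_set_by_down_set[of X B'])
  also have "\<dots> = (\<Sum>A''\<in>{A'..X}. \<Sum>r\<in>{r\<in>lin_orders X. down_set r x = A''}. \<Sum>B''\<in>{B'..X}.
      \<Sum>r'\<in>{r'\<in>lin_orders X. down_set r' y = B''}. \<nu> r * t x r r')"
    using assms(1) \<open>A' \<subseteq> X\<close> \<open>x \<in> A'\<close> by (rule sum_N_set_by_down_set)
  also have "\<dots> = (\<Sum>A''\<in>{A'..X}. \<Sum>B''\<in>{B'..X}.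
      \<Sum>r\<in>{r\<in>lin_orders X. down_set r x = A''}. \<Sum>r'\<in>{r'\<in>lin_orders X. down_set r' y = B''}.
        \<nu> r * t x r r')"
    by (rule sum.cong[OF refl], rule sum.swap)
  finally show "p x y A' B' = \<dots>" .
qed

lemma CDRU_imp_complete_monotonicity_marginality:
  assumes "finite X" "consistent_with_CDRU X p"
  shows "complete_monotonicity X p \<and> marginality X p"
proof -
  obtain \<nu> t where \<nu>: "is_distribution X \<nu>" and t: "is_transition X t"
    and rep: "\<forall>A \<in> nonempty_subsets X. \<forall>B \<in> nonempty_subsets X. \<forall>x \<in> A. \<forall>y \<in> B.
      p x y A B = (\<Sum>r\<in>N_set X x A. \<Sum>r'\<in>N_set X y B. \<nu> r * t x r r')"
    using assms(2) unfolding consistent_with_CDRU_def by blast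
  have "moebius_inverse X p x y A B \<ge> 0"
    if "A \<subseteq> X" "B \<subseteq> X" "x \<in> A" "y \<in> B" for A B x y
  proof -
    have "moebius_inverse X p x y A B = (\<Sum>r\<in>{r\<in>lin_orders X. down_set r x = A}.
        \<Sum>r'\<in>{r'\<in>lin_orders X. down_set r' y = B}. \<nu> r * t x r r')"
      using assms(1) that
      by (intro moebius_inverse_CDRU rep[rule_format]) (auto simp: nonempty_subsets_def)
    also have "\<dots> \<ge> 0"
      using \<nu> t that
      by (intro sum_nonneg mult_nonneg_nonneg) (auto simp: is_distribution_def is_transition_def)
    finally show ?thesis .
  qed
  moreover have "(\<Sum>y\<in>B. p x y A B) = (\<Sum>r\<in>N_set X x A. \<nu> r)"
    if "A \<in> nonempty_subsets X" "B \<in> nonempty_subsets X" "x \<in> A" for A B x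
  proof -
    have "(\<Sum>y\<in>B. p x y A B) = (\<Sum>y\<in>B. \<Sum>r\<in>N_set X x A. \<Sum>r'\<in>N_set X y B. \<nu> r * t x r r')"
      using that by (intro sum.cong refl rep[rule_format])
    also have "\<dots> = (\<Sum>r\<in>N_set X x A. \<nu> r)"
      using assms(1) t that by (intro sum_CDRU_second_choice) (auto simp: nonempty_subsets_def)
    finally show ?thesis .
  qed
  ultimately show ?thesis
    unfolding complete_monotonicity_def marginality_def nonempty_subsets_def by simp
qed

section \<open>Sufficiency\<close>

lemma consistent_with_CDRU_empty: "consistent_with_CDRU {} p"
proof -
  have lin_orders_empty: "lin_orders {} = {{} :: 'a rel}"
    by (auto simp: lin_orders_def strict_linear_order_on_def trans_def irrefl_def total_on_def)
  show ?thesis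
    unfolding consistent_with_CDRU_def is_transition_def is_distribution_def lin_orders_empty
    by (intro exI[of _ "\<lambda>_. 1"] exI[of _ "\<lambda>_ _ _. 1"]) (simp add: nonempty_subsets_def)
qed

locale completely_monotone_marginal_rule =
  fixes X :: "'a set" and p :: "'a \<Rightarrow> 'a \<Rightarrow> 'a set \<Rightarrow> 'a set \<Rightarrow> real"
  assumes finite_X: "finite X"
    and rule: "random_joint_choice_rule X p"
    and cm: "complete_monotonicity X p"
    and marg: "marginality X p"
begin

definition marginal :: "'a \<Rightarrow> 'a set \<Rightarrow> real" where
  "marginal x A = (\<Sum>y\<in>X. p x y A X)"

definition marginal_moebius :: "'a \<Rightarrow> 'a set \<Rightarrow> real" where
  "marginal_moebius x A = moebius X (marginal x) A"

text \<open>For a CDRU rule, \<open>partial_moebius x A y B\<close> is the probability that the first-period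
  lower set of \<open>x\<close> is exactly \<open>A\<close> and that \<open>y\<close> is the best item of \<open>B\<close> in the second period.\<close>

definition partial_moebius :: "'a \<Rightarrow> 'a set \<Rightarrow> 'a \<Rightarrow> 'a set \<Rightarrow> real" where
  "partial_moebius x A y B = moebius X (\<lambda>A'. p x y A' B) A"

lemma sum_p_eq_marginal:
  assumes "A \<subseteq> X" "x \<in> A" "B \<subseteq> X" "B \<noteq> {}"
  shows "(\<Sum>y\<in>B. p x y A B) = marginal x A"
  using marg assms unfolding marginality_def marginal_def nonempty_subsets_def by blast

lemma moebius_inverse_nonneg:
  "A \<subseteq> X \<Longrightarrow> x \<in> A \<Longrightarrow> B \<subseteq> X \<Longrightarrow> y \<in> B \<Longrightarrow> moebius_inverse X p x y A B \<ge> 0"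
  using cm unfolding complete_monotonicity_def nonempty_subsets_def by blast

lemma moebius_inverse_eq_partial_moebius:
  "moebius_inverse X p x y A B = moebius X (partial_moebius x A y) B"
  unfolding partial_moebius_def by (rule moebius_inverse_iterated(2))

lemma partial_moebius_nonneg:
  assumes "A \<subseteq> X" "x \<in> A" "B \<subseteq> X" "y \<in> B"
  shows "partial_moebius x A y B \<ge> 0"
proof -
  have "partial_moebius x A y B = (\<Sum>B'\<in>{B..X}. moebius_inverse X p x y A B')"
    using finite_X assms(3) by (simp add: moebius_inverse_eq_partial_moebius sum_moebius)
  also have "\<dots> \<ge> 0"
    using assms by (intro sum_nonneg moebius_inverse_nonneg) auto
  finally show ?thesis .
qed

lemma sum_partial_moebius:
  assumes "A \<subseteq> X" "x \<in> A" "B \<subseteq> X" "B \<noteq> {}"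
  shows "(\<Sum>y\<in>B. partial_moebius x A y B) = marginal_moebius x A"
proof -
  have "(\<Sum>y\<in>B. partial_moebius x A y B) = moebius X (\<lambda>A'. \<Sum>y\<in>B. p x y A' B) A"
    unfolding partial_moebius_def by (rule moebius_sum[symmetric])
  also have "\<dots> = marginal_moebius x A"
    unfolding marginal_moebius_def using assms by (intro moebius_cong sum_p_eq_marginal) auto
  finally show ?thesis .
qed

lemma marginal_moebius_nonneg:
  assumes "A \<subseteq> X" "x \<in> A"
  shows "marginal_moebius x A \<ge> 0"
proof -
  have "marginal_moebius x A = (\<Sum>y\<in>X. partial_moebius x A y X)"
    using assms by (intro sum_partial_moebius[symmetric]) auto
  also have "\<dots> \<ge> 0"
    using assms by (intro sum_nonneg partial_moebius_nonneg) auto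
  finally show ?thesis .
qed

lemma choice_flow_marginal_moebius:
  assumes "X \<noteq> {}"
  shows "choice_flow X marginal_moebius"
proof
  have total: "(\<Sum>x\<in>B. marginal x B) = 1" if "B \<subseteq> X" "B \<noteq> {}" for B
    using rule that assms unfolding random_joint_choice_rule_def nonempty_subsets_def marginal_def
    by blast
  show "(\<Sum>x\<in>X. marginal_moebius x X) = 1"
    using total[of X] assms by (simp add: marginal_moebius_def)
  fix A assume "A \<subseteq> X" "A \<noteq> {}" "A \<noteq> X"
  then show "(\<Sum>x\<in>A. marginal_moebius x A) = (\<Sum>y\<in>X - A. marginal_moebius y (insert y A))"
    unfolding marginal_moebius_def using finite_X total by (intro sum_moebius_flow)
qed (use finite_X marginal_moebius_nonneg in auto)

lemma choice_flow_conditional: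
  assumes "A \<subseteq> X" "x \<in> A" "marginal_moebius x A > 0"
  shows "choice_flow X (\<lambda>y B. moebius_inverse X p x y A B / marginal_moebius x A)"
proof
  have "X \<noteq> {}"
    using assms(1,2) by auto
  then show "(\<Sum>y\<in>X. moebius_inverse X p x y A X / marginal_moebius x A) = 1"
    using assms sum_partial_moebius[of A x X]
    by (simp add: moebius_inverse_eq_partial_moebius flip: sum_divide_distrib)
  fix B assume "B \<subseteq> X" "B \<noteq> {}" "B \<noteq> X"
  then show "(\<Sum>y\<in>B. moebius_inverse X p x y A B / marginal_moebius x A)
      = (\<Sum>z\<in>X - B. moebius_inverse X p x z A (insert z B) / marginal_moebius x A)"
    using assms finite_X sum_partial_moebius[OF assms(1,2)]
    by (simp add: moebius_inverse_eq_partial_moebius sum_moebius_flow flip: sum_divide_distrib)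
qed (use finite_X assms moebius_inverse_nonneg in auto)

lemma partial_moebius_eq_0:
  assumes "A \<subseteq> X" "x \<in> A" "marginal_moebius x A = 0" "B \<subseteq> X" "y \<in> B"
  shows "partial_moebius x A y B = 0"
proof -
  have "finite B" "(\<Sum>y\<in>B. partial_moebius x A y B) = 0"
    using finite_X finite_subset sum_partial_moebius[OF assms(1,2)] assms(3-5) by auto
  then show ?thesis
    using assms partial_moebius_nonneg by (subst (asm) sum_nonneg_eq_0_iff) auto
qed

lemma exists_conditional_distribution:
  assumes "A \<subseteq> X" "x \<in> A"
  shows "\<exists>\<tau>. is_distribution X \<tau> \<and> (\<forall>y B. B \<subseteq> X \<longrightarrow> y \<in> B \<longrightarrow>
    marginal_moebius x A * (\<Sum>r\<in>N_set X y B. \<tau> r) = partial_moebius x A y B)"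
proof (cases "marginal_moebius x A = 0")
  case True
  \<comment> \<open>The first period never produces the lower set \<open>A\<close> for \<open>x\<close>, so any distribution will do.\<close>
  obtain \<nu> where "is_distribution X \<nu>"
    using choice_flow.exists_lin_orders_distribution[OF choice_flow_marginal_moebius] assms by blast
  then show ?thesis
    using True assms by (auto simp: partial_moebius_eq_0)
next
  case False
  then have pos: "marginal_moebius x A > 0"
    using marginal_moebius_nonneg[OF assms] by linarith
  obtain \<tau> where \<tau>: "is_distribution X \<tau>" and down: "\<And>B y. B \<subseteq> X \<Longrightarrow> y \<in> B \<Longrightarrow>
      (\<Sum>r\<in>{r\<in>lin_orders X. down_set r y = B}. \<tau> r)
        = moebius_inverse X p x y A B / marginal_moebius x A"
    using choice_flow.exists_lin_orders_distribution[OF choice_flow_conditional[OF assms pos]]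
    by blast
  have "(\<Sum>r\<in>N_set X y B. \<tau> r) = partial_moebius x A y B / marginal_moebius x A"
    if "B \<subseteq> X" "y \<in> B" for y B
  proof -
    have "(\<Sum>r\<in>N_set X y B. \<tau> r)
        = (\<Sum>B'\<in>{B..X}. moebius_inverse X p x y A B' / marginal_moebius x A)"
      using finite_X that by (simp add: sum_N_set_by_down_set down subset_iff)
    also have "\<dots> = partial_moebius x A y B / marginal_moebius x A"
      using finite_X that
      by (simp add: moebius_inverse_eq_partial_moebius sum_moebius flip: sum_divide_distrib)
    finally show ?thesis .
  qed
  with \<tau> pos show ?thesis
    by auto
qed

definition conditional_distribution :: "'a \<Rightarrow> 'a set \<Rightarrow> 'a rel \<Rightarrow> real" where
  "conditional_distribution x A = (SOME \<tau>. is_distribution X \<tau> \<and> (\<forall>y B. B \<subseteq> X \<longrightarrow> y \<in> B \<longrightarrow>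
    marginal_moebius x A * (\<Sum>r\<in>N_set X y B. \<tau> r) = partial_moebius x A y B))"

lemma conditional_distribution:
  assumes "A \<subseteq> X" "x \<in> A"
  shows "is_distribution X (conditional_distribution x A)"
    and "B \<subseteq> X \<Longrightarrow> y \<in> B \<Longrightarrow>
      marginal_moebius x A * (\<Sum>r\<in>N_set X y B. conditional_distribution x A r)
        = partial_moebius x A y B"
  using someI_ex[OF exists_conditional_distribution[OF assms]]
  unfolding conditional_distribution_def by blast+

lemma is_transition_conditional_distribution:
  "is_transition X (\<lambda>x r. conditional_distribution x (down_set r x))"
  unfolding is_transition_def by (simp add: down_set_subset conditional_distribution(1))

lemma p_eq_two_stage_sum:
  assumes \<nu>: "\<And>A x. A \<subseteq> X \<Longrightarrow> x \<in> A \<Longrightarrow>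
      (\<Sum>r\<in>{r\<in>lin_orders X. down_set r x = A}. \<nu> r) = marginal_moebius x A"
    and "A \<subseteq> X" "B \<subseteq> X" "x \<in> A" "y \<in> B"
  shows "p x y A B = (\<Sum>r\<in>N_set X x A. \<Sum>r'\<in>N_set X y B.
    \<nu> r * conditional_distribution x (down_set r x) r')"
proof -
  let ?G = "\<lambda>A'. \<Sum>r'\<in>N_set X y B. conditional_distribution x A' r'"
  have "p x y A B = (\<Sum>A'\<in>{A..X}. partial_moebius x A' y B)"
    unfolding partial_moebius_def using finite_X assms(2,3) by (simp add: sum_moebius)
  also have "\<dots> = (\<Sum>A'\<in>{A..X}. \<Sum>r\<in>{r\<in>lin_orders X. down_set r x = A'}.
      \<nu> r * ?G (down_set r x))"
  proof (rule sum.cong[OF refl])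
    fix A' assume "A' \<in> {A..X}"
    then have "A' \<subseteq> X" "x \<in> A'"
      using assms by auto
    then show "partial_moebius x A' y B
        = (\<Sum>r\<in>{r\<in>lin_orders X. down_set r x = A'}. \<nu> r * ?G (down_set r x))"
      using conditional_distribution(2)[of A' x B y] \<nu>[of A' x] assms(3,5)
      by (simp flip: sum_distrib_right)
  qed
  also have "\<dots> = (\<Sum>r\<in>N_set X x A. \<nu> r * ?G (down_set r x))"
    using finite_X assms(2,4) by (simp add: sum_N_set_by_down_set)
  finally show ?thesis
    by (simp add: sum_distrib_left)
qed

theorem consistent_with_CDRU: "consistent_with_CDRU X p"
proof (cases "X = {}")
  case True
  then show ?thesis
    using consistent_with_CDRU_empty by simp
next
  case False
  then obtain \<nu> where "is_distribution X \<nu>" and \<nu>: "\<And>A x. A \<subseteq> X \<Longrightarrow> x \<in> A \<Longrightarrow>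
      (\<Sum>r\<in>{r\<in>lin_orders X. down_set r x = A}. \<nu> r) = marginal_moebius x A"
    using choice_flow.exists_lin_orders_distribution[OF choice_flow_marginal_moebius] by blast
  then show ?thesis
    unfolding consistent_with_CDRU_def
    using is_transition_conditional_distribution p_eq_two_stage_sum[OF \<nu>]
    by (intro exI[of _ \<nu>] exI[of _ "\<lambda>x r. conditional_distribution x (down_set r x)"])
      (auto simp: nonempty_subsets_def)
qed

end

theorem theorem5:
  fixes X :: "'a set" and p :: "'a \<Rightarrow> 'a \<Rightarrow> 'a set \<Rightarrow> 'a set \<Rightarrow> real"
  assumes "finite X" and "random_joint_choice_rule X p"
  shows "consistent_with_CDRU X p \<longleftrightarrow> complete_monotonicity X p \<and> marginality X p"
proof
  assume "consistent_with_CDRU X p"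
  with assms(1) show "complete_monotonicity X p \<and> marginality X p"
    by (rule CDRU_imp_complete_monotonicity_marginality)
next
  assume "complete_monotonicity X p \<and> marginality X p"
  then interpret completely_monotone_marginal_rule X p
    using assms by unfold_locales auto
  show "consistent_with_CDRU X p"
    by (rule consistent_with_CDRU)
qed

end
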